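(* Let $a,q,\mu^1,\dots,\mu^n,\eta^1,\dots,\eta^n$ be smooth functions of $R^1,\dots,R^n$, with all $\mu^i$ nowhere zero, satisfying for all $i\ne j$ (with $D_{ij}:=\mu^i(a\eta^j-q)-\mu^j(a\eta^i-q)$ nowhere zero) $$q_i=\eta^ia_i,\quad a_{ij}=\frac{(\mu^i+\mu^j)(\eta^j-\eta^i)}{D_{ij}}a_ia_j,\quad \eta^i_j=\frac{\mu^i(\eta^j-\eta^i)^2}{D_{ij}}a_j,\quad \mu^i_j=\frac{\mu^i(\eta^j-\eta^i)(\mu^j-\mu^i)}{D_{ij}}a_j.$$ Then, locally, there is a function $u$ with $u_i=a_i/\mu^i$ for all $i$; the functions $c^i:=(a\eta^i-q)/\mu^i$ satisfy $\partial c^i/\partial R^j=0$ for $j\ne i$; and the system takes the form $$q_i=\mu^i\eta^iu_i,\quad u_{ij}=2\frac{\eta^j-\eta^i}{c^j-c^i}u_iu_j,\quad \eta^i_j=\frac{(\eta^j-\eta^i)^2}{c^j-c^i}u_j,\quad \mu^i_j=\frac{(\eta^j-\eta^i)(\mu^j-\mu^i)}{c^j-c^i}u_j\qquad(i\ne j).$$ In particular $u,\eta^i$ satisfy the same system $\eta^i_j=\frac{(\eta^j-\eta^i)^2}{c^j-c^i}u_j$, $u_{ij}=2\frac{\eta^j-\eta^i}{c^j-c^i}u_iu_j$ as in the second heavenly case.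
   Context: Lower indices denote partial derivatives with respect to $R^1,\dots,R^n$, e.g. $a_i=\partial a/\partial R^i$, $\eta^i_j=\partial\eta^i/\partial R^j$. (This is the Gibbons-Tsarev system for hydrodynamic reductions of the first heavenly equation $\Omega_{xy}\Omega_{zt}-\Omega_{xt}\Omega_{zy}=1$ with $a=\Omega_{xy}$, $q=\Omega_{zy}$.) *)

theory Defs
  imports "HOL-Analysis.Analysis"
begin

definition pd :: "'n::finite \<Rightarrow> (real^'n \<Rightarrow> real) \<Rightarrow> real^'n \<Rightarrow> real" where
  "pd i f x = deriv (\<lambda>t. f (x + t *\<^sub>R axis i 1)) 0"

fun pds :: "'n::finite list \<Rightarrow> (real^'n \<Rightarrow> real) \<Rightarrow> real^'n \<Rightarrow> real" where
  "pds [] f = f"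
| "pds (i # is) f = pd i (pds is f)"

definition smooth_on :: "(real^'n::finite) set \<Rightarrow> (real^'n \<Rightarrow> real) \<Rightarrow> bool" where
  "smooth_on U f \<longleftrightarrow> (\<forall>is. pds is f differentiable_on U)"

end

theory Submission
  imports Defs
begin

(*
  Substituting the equations for q_j, eta^i_j and mu^i_j into the derivative of
  c^i = (a eta^i - q) / mu^i shows that c^i depends on R^i alone, and the denominator of
  the system factors as D_ij = mu^i mu^j (c^j - c^i).  With this factorisation the
  a_ij-equation says that d_j (a_i / mu^i) = 2 (eta^j - eta^i) / (c^j - c^i)
  (a_i / mu^i) (a_j / mu^j), which is symmetric in i and j.  Hence the 1-form
  sum_i (a_i / mu^i) dR^i is closed and, by the Poincare lemma (the radial homotopy
  formula on a ball), locally exact: it is du.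
*)

lemma has_real_derivative_pd:
  fixes f :: "real^'n::finite \<Rightarrow> real"
  assumes "f differentiable (at x)"
  shows "((\<lambda>t. f (x + t *\<^sub>R axis i 1)) has_real_derivative pd i f x) (at 0)"
proof -
  have "(\<lambda>t::real. x + t *\<^sub>R axis i 1) differentiable (at 0)"
    by (intro derivative_intros)
  then have "(f \<circ> (\<lambda>t::real. x + t *\<^sub>R axis i 1)) differentiable (at 0)"
    using assms by (intro differentiable_chain_at) simp_all
  then show ?thesis
    unfolding pd_def by (simp add: DERIV_deriv_iff_real_differentiable o_def)
qed

lemma pd_eq_has_derivative:
  fixes f :: "real^'n::finite \<Rightarrow> real"
  assumes "(f has_derivative D) (at x)"
  shows "pd i f x = D (axis i 1)"
proof -
  have "((\<lambda>t::real. x + t *\<^sub>R axis i 1) has_derivative (\<lambda>t. t *\<^sub>R axis i 1)) (at 0)"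
    by (auto intro!: derivative_eq_intros)
  moreover have "(f has_derivative D) (at ((\<lambda>t::real. x + t *\<^sub>R axis i 1) 0))"
    using assms by simp
  ultimately have "((\<lambda>t. f (x + t *\<^sub>R axis i 1)) has_derivative (\<lambda>t. D (t *\<^sub>R axis i 1))) (at 0)"
    by (rule has_derivative_compose)
  moreover have "(\<lambda>t. D (t *\<^sub>R axis i 1)) = (*) (D (axis i 1))"
    using has_derivative_linear[OF assms] by (auto simp: linear_scale mult.commute)
  ultimately have "((\<lambda>t. f (x + t *\<^sub>R axis i 1)) has_real_derivative D (axis i 1)) (at 0)"
    unfolding has_field_derivative_def by simp
  then show ?thesis
    unfolding pd_def by (rule DERIV_imp_deriv)
qed

lemma has_derivative_pd_sum:
  fixes f :: "real^'n::finite \<Rightarrow> real"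
  assumes "f differentiable (at x)"
  shows "(f has_derivative (\<lambda>h. \<Sum>m\<in>UNIV. h $ m * pd m f x)) (at x)"
proof -
  obtain D where D: "(f has_derivative D) (at x)"
    using assms unfolding differentiable_def by blast
  have "D = (\<lambda>h. \<Sum>m\<in>UNIV. h $ m * pd m f x)"
  proof
    fix h
    have "D h = D (\<Sum>m\<in>UNIV. h $ m *\<^sub>R axis m 1)"
      using basis_expansion[of h] by (simp add: scalar_mult_eq_scaleR)
    also have "\<dots> = (\<Sum>m\<in>UNIV. h $ m * D (axis m 1))"
      using has_derivative_linear[OF D] by (simp add: linear_sum linear_scale)
    finally show "D h = (\<Sum>m\<in>UNIV. h $ m * pd m f x)"
      by (simp add: pd_eq_has_derivative[OF D])
  qed
  then show ?thesis
    using D by simp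
qed

lemma pd_cong_open:
  fixes f g :: "real^'n::finite \<Rightarrow> real"
  assumes "open V" "\<And>y. y \<in> V \<Longrightarrow> f y = g y" "x \<in> V"
  shows "pd i f x = pd i g x"
proof -
  have "((\<lambda>t::real. x + t *\<^sub>R axis i 1) \<longlongrightarrow> x + 0 *\<^sub>R axis i 1) (nhds 0)"
    by (intro tendsto_intros filterlim_ident)
  then have "((\<lambda>t::real. x + t *\<^sub>R axis i 1) \<longlongrightarrow> x) (nhds 0)"
    by simp
  moreover have "eventually (\<lambda>y. y \<in> V) (nhds x)"
    using assms by (simp add: eventually_nhds_in_open)
  ultimately have "eventually (\<lambda>t. x + t *\<^sub>R axis i 1 \<in> V) (nhds (0::real))"
    unfolding filterlim_iff by blast
  then have "eventually (\<lambda>t. f (x + t *\<^sub>R axis i 1) = g (x + t *\<^sub>R axis i 1)) (nhds (0::real))"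
    by eventually_elim (simp add: assms)
  then show ?thesis
    unfolding pd_def by (intro deriv_cong_ev) auto
qed

lemma pds_cong_open:
  fixes f g :: "real^'n::finite \<Rightarrow> real"
  assumes "open V" "\<And>y. y \<in> V \<Longrightarrow> f y = g y" "x \<in> V"
  shows "pds js f x = pds js g x"
  using assms(3)
proof (induction js arbitrary: x)
  case (Cons i js)
  then show ?case
    using pd_cong_open[OF assms(1), of "pds js f" "pds js g" x i] by simp
qed (use assms in simp)

lemma pds_snoc: "pds (js @ [k]) f = pds js (pd k f)"
  by (induction js) auto

lemma pd_const: "pd i (\<lambda>y. c) = (\<lambda>y. 0)"
  unfolding pd_def by (simp add: fun_eq_iff)

context
  fixes f g :: "real^'n::finite \<Rightarrow> real" and x :: "real^'n"
  assumes f: "f differentiable (at x)" and g: "g differentiable (at x)"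
begin

lemma pd_add: "pd i (\<lambda>y. f y + g y) x = pd i f x + pd i g x"
  unfolding pd_def[of i "\<lambda>y. f y + g y"]
  by (intro DERIV_imp_deriv DERIV_add has_real_derivative_pd f g)

lemma pd_diff: "pd i (\<lambda>y. f y - g y) x = pd i f x - pd i g x"
  unfolding pd_def[of i "\<lambda>y. f y - g y"]
  by (intro DERIV_imp_deriv DERIV_diff has_real_derivative_pd f g)

lemma pd_mult: "pd i (\<lambda>y. f y * g y) x = pd i f x * g x + f x * pd i g x"
  unfolding pd_def[of i "\<lambda>y. f y * g y"]
  using DERIV_mult[OF has_real_derivative_pd[OF f] has_real_derivative_pd[OF g]]
  by (intro DERIV_imp_deriv) (simp add: mult.commute)

lemma pd_divide:
  assumes "g x \<noteq> 0"
  shows "pd i (\<lambda>y. f y / g y) x = (pd i f x * g x - f x * pd i g x) / (g x)^2"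
  unfolding pd_def[of i "\<lambda>y. f y / g y"]
  using DERIV_divide[OF has_real_derivative_pd[OF f] has_real_derivative_pd[OF g]] assms
  by (intro DERIV_imp_deriv) (simp add: power2_eq_square)

end

lemma pd_inverse:
  fixes f :: "real^'n::finite \<Rightarrow> real"
  assumes "f differentiable (at x)" "f x \<noteq> 0"
  shows "pd i (\<lambda>y. 1 / f y) x = - (pd i f x * (1 / f x) * (1 / f x))"
  using pd_divide[where f = "\<lambda>y. 1" and g = f] assms by (simp add: pd_const power2_eq_square)

definition differentiable_upto :: "(real^'n::finite) set \<Rightarrow> nat \<Rightarrow> (real^'n \<Rightarrow> real) \<Rightarrow> bool" where
  "differentiable_upto V n f \<longleftrightarrow> (\<forall>js. length js \<le> n \<longrightarrow> pds js f differentiable_on V)"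

lemma smooth_on_iff_differentiable_upto: "smooth_on V f \<longleftrightarrow> (\<forall>n. differentiable_upto V n f)"
  unfolding smooth_on_def differentiable_upto_def by (meson order_refl)

lemma differentiable_upto_imp_differentiable_on: "differentiable_upto V n f \<Longrightarrow> f differentiable_on V"
  unfolding differentiable_upto_def by (metis list.size(3) le0 pds.simps(1))

lemma differentiable_upto_mono: "differentiable_upto V n f \<Longrightarrow> m \<le> n \<Longrightarrow> differentiable_upto V m f"
  unfolding differentiable_upto_def by auto

lemma differentiable_upto_pd:
  "differentiable_upto V (Suc n) f \<Longrightarrow> differentiable_upto V n (pd k f)"
  unfolding differentiable_upto_def by (metis pds_snoc length_append_singleton not_less_eq_eq)

lemma differentiable_upto_SucI:
  assumes "f differentiable_on V" "\<And>k. differentiable_upto V n (pd k f)"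
  shows "differentiable_upto V (Suc n) f"
  unfolding differentiable_upto_def
proof (intro allI impI)
  fix js :: "'a list"
  assume "length js \<le> Suc n"
  then show "pds js f differentiable_on V"
    using assms by (cases js rule: rev_cases) (auto simp: pds_snoc differentiable_upto_def)
qed

lemma differentiable_on_transform:
  assumes "f differentiable_on V" "\<And>y. y \<in> V \<Longrightarrow> f y = g y"
  shows "g differentiable_on V"
  unfolding differentiable_on_def
proof
  fix x
  assume "x \<in> V"
  then have "f differentiable at x within V"
    using assms(1) by (simp add: differentiable_on_def)
  then show "g differentiable at x within V"
    using \<open>x \<in> V\<close> assms(2) by (rule differentiable_transform_within[OF _ zero_less_one]) simp
qed

lemma differentiable_upto_cong:
  assumes "open V" "\<And>y. y \<in> V \<Longrightarrow> f y = g y" "differentiable_upto V n f"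
  shows "differentiable_upto V n g"
  unfolding differentiable_upto_def
proof (intro allI impI)
  fix js :: "'a list"
  assume "length js \<le> n"
  then have "pds js f differentiable_on V"
    using assms(3) unfolding differentiable_upto_def by simp
  then show "pds js g differentiable_on V"
    using pds_cong_open[OF assms(1,2)] by (rule differentiable_on_transform)
qed

lemma differentiable_upto_differentiable_at:
  assumes "differentiable_upto V n f" "open V" "length js \<le> n" "y \<in> V"
  shows "pds js f differentiable (at y)"
  using assms at_within_open[OF assms(4,2)] unfolding differentiable_upto_def differentiable_on_def
  by metis

lemma differentiable_upto_const: "differentiable_upto V n (\<lambda>y. c)"
proof (induction n arbitrary: c)
  case 0
  then show ?case unfolding differentiable_upto_def by (simp add: differentiable_on_def)
next
  case (Suc n)
  show ?case
    by (rule differentiable_upto_SucI) (simp_all add: pd_const Suc.IH)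
qed

context
  fixes V :: "(real^'n::finite) set"
  assumes "open V"
begin

lemma differentiable_upto_add:
  "differentiable_upto V n f \<Longrightarrow> differentiable_upto V n g \<Longrightarrow>
    differentiable_upto V n (\<lambda>y. f y + g y)"
proof (induction n arbitrary: f g)
  case 0
  then show ?case
    using differentiable_upto_imp_differentiable_on
    by (simp add: differentiable_upto_def differentiable_on_add)
next
  case (Suc n)
  show ?case
  proof (rule differentiable_upto_SucI)
    show "(\<lambda>y. f y + g y) differentiable_on V"
      using Suc.prems by (intro differentiable_on_add differentiable_upto_imp_differentiable_on)
    fix k
    have "differentiable_upto V n (\<lambda>y. pd k f y + pd k g y)"
      using Suc by (simp add: differentiable_upto_pd)
    moreover have "pd k f y + pd k g y = pd k (\<lambda>y. f y + g y) y" if "y \<in> V" for y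
      using differentiable_upto_differentiable_at[OF Suc.prems(1) \<open>open V\<close> _ that, of "[]"]
        differentiable_upto_differentiable_at[OF Suc.prems(2) \<open>open V\<close> _ that, of "[]"]
      by (simp add: pd_add)
    ultimately show "differentiable_upto V n (pd k (\<lambda>y. f y + g y))"
      by (rule differentiable_upto_cong[OF \<open>open V\<close>, rotated])
  qed
qed

lemma differentiable_upto_mult:
  "differentiable_upto V n f \<Longrightarrow> differentiable_upto V n g \<Longrightarrow>
    differentiable_upto V n (\<lambda>y. f y * g y)"
proof (induction n arbitrary: f g)
  case 0
  then show ?case
    using differentiable_upto_imp_differentiable_on
    by (simp add: differentiable_upto_def differentiable_on_mult)
next
  case (Suc n)
  show ?case
  proof (rule differentiable_upto_SucI)
    show "(\<lambda>y. f y * g y) differentiable_on V"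
      using Suc.prems by (intro differentiable_on_mult differentiable_upto_imp_differentiable_on)
    fix k
    have "differentiable_upto V n f" "differentiable_upto V n g"
      using Suc.prems by (simp_all add: differentiable_upto_mono)
    then have "differentiable_upto V n (\<lambda>y. pd k f y * g y + f y * pd k g y)"
      using Suc by (intro differentiable_upto_add Suc.IH differentiable_upto_pd)
    moreover have "pd k f y * g y + f y * pd k g y = pd k (\<lambda>y. f y * g y) y" if "y \<in> V" for y
      using differentiable_upto_differentiable_at[OF Suc.prems(1) \<open>open V\<close> _ that, of "[]"]
        differentiable_upto_differentiable_at[OF Suc.prems(2) \<open>open V\<close> _ that, of "[]"]
      by (simp add: pd_mult)
    ultimately show "differentiable_upto V n (pd k (\<lambda>y. f y * g y))"
      by (rule differentiable_upto_cong[OF \<open>open V\<close>, rotated])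
  qed
qed

lemma differentiable_upto_inverse:
  assumes "\<And>y. y \<in> V \<Longrightarrow> f y \<noteq> 0"
  shows "differentiable_upto V n f \<Longrightarrow> differentiable_upto V n (\<lambda>y. 1 / f y)"
proof (induction n)
  case 0
  then show ?case
    using differentiable_upto_imp_differentiable_on differentiable_on_inverse[of f V] assms
    by (simp add: differentiable_upto_def inverse_eq_divide)
next
  case (Suc n)
  have inv: "(\<lambda>y. 1 / f y) differentiable_on V"
    using differentiable_upto_imp_differentiable_on[OF Suc.prems] assms
    by (auto dest: differentiable_on_inverse simp: inverse_eq_divide)
  have "differentiable_upto V n (\<lambda>y. 1 / f y)"
    using Suc by (simp add: differentiable_upto_mono)
  then have "differentiable_upto V n (\<lambda>y. - 1 * (pd k f y * (1 / f y) * (1 / f y)))" for k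
    using Suc.prems
    by (intro differentiable_upto_mult differentiable_upto_const differentiable_upto_pd)
  moreover have "- 1 * (pd k f y * (1 / f y) * (1 / f y)) = pd k (\<lambda>y. 1 / f y) y"
    if "y \<in> V" for k y
    using differentiable_upto_differentiable_at[OF Suc.prems \<open>open V\<close> _ that, of "[]"] assms that
    by (simp add: pd_inverse)
  ultimately have "differentiable_upto V n (pd k (\<lambda>y. 1 / f y))" for k
    by (rule differentiable_upto_cong[OF \<open>open V\<close>, rotated])
  with inv show ?case
    by (rule differentiable_upto_SucI)
qed

lemma smooth_on_mult: "smooth_on V f \<Longrightarrow> smooth_on V g \<Longrightarrow> smooth_on V (\<lambda>y. f y * g y)"
  by (simp add: smooth_on_iff_differentiable_upto differentiable_upto_mult)

lemma smooth_on_divide: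
  assumes "smooth_on V f" "smooth_on V g" "\<And>y. y \<in> V \<Longrightarrow> g y \<noteq> 0"
  shows "smooth_on V (\<lambda>y. f y / g y)"
proof -
  have "smooth_on V (\<lambda>y. 1 / g y)"
    using assms(2,3) differentiable_upto_inverse[of g]
    by (simp add: smooth_on_iff_differentiable_upto)
  then have "smooth_on V (\<lambda>y. f y * (1 / g y))"
    by (rule smooth_on_mult[OF assms(1)])
  then show ?thesis
    by simp
qed

end

lemma smooth_on_pd: "smooth_on V f \<Longrightarrow> smooth_on V (pd k f)"
  by (simp add: smooth_on_iff_differentiable_upto differentiable_upto_pd)

lemma smooth_on_imp_differentiable_on: "smooth_on V f \<Longrightarrow> f differentiable_on V"
  unfolding smooth_on_def by (metis pds.simps(1))

lemma smooth_on_subset: "smooth_on U f \<Longrightarrow> V \<subseteq> U \<Longrightarrow> smooth_on V f"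
  unfolding smooth_on_def using differentiable_on_subset by blast

lemma smooth_on_cong:
  "open V \<Longrightarrow> (\<And>y. y \<in> V \<Longrightarrow> f y = g y) \<Longrightarrow> smooth_on V f \<Longrightarrow> smooth_on V g"
  using differentiable_upto_cong by (metis smooth_on_iff_differentiable_upto)

lemma smooth_onI_pd:
  assumes "f differentiable_on V" "\<And>k. smooth_on V (pd k f)"
  shows "smooth_on V f"
  unfolding smooth_on_iff_differentiable_upto
proof
  fix n
  show "differentiable_upto V n f"
  proof (cases n)
    case 0
    then show ?thesis
      using assms(1) by (simp add: differentiable_upto_def)
  next
    case (Suc m)
    then show ?thesis
      using assms by (simp add: differentiable_upto_SucI smooth_on_iff_differentiable_upto)
  qed
qed

lemma smooth_on_differentiable_at:
  "smooth_on V f \<Longrightarrow> open V \<Longrightarrow> x \<in> V \<Longrightarrow> pds js f differentiable (at x)"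
  using differentiable_upto_differentiable_at smooth_on_iff_differentiable_upto by blast

definition radial_potential ::
    "('n::finite \<Rightarrow> real^'n \<Rightarrow> real) \<Rightarrow> real^'n \<Rightarrow> real^'n \<Rightarrow> real" where
  "radial_potential f x0 y =
     integral {0..1} (\<lambda>t. \<Sum>k\<in>UNIV. f k (x0 + t *\<^sub>R (y - x0)) * (y - x0) $ k)"

(* The y-gradient of the integrand of radial_potential; when f is closed, its i-th
   component is also the t-derivative of t f_i(x0 + t (y - x0)). *)
definition radial_integrand_gradient ::
    "('n::finite \<Rightarrow> real^'n \<Rightarrow> real) \<Rightarrow> real^'n \<Rightarrow> real^'n \<Rightarrow> real \<Rightarrow> real^'n" where
  "radial_integrand_gradient f x0 y t =
     (\<chi> m. f m (x0 + t *\<^sub>R (y - x0))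
            + t * (\<Sum>k\<in>UNIV. (y - x0) $ k * pd m (f k) (x0 + t *\<^sub>R (y - x0))))"

context
  fixes f :: "'n::finite \<Rightarrow> real^'n \<Rightarrow> real" and V :: "(real^'n) set" and x0 :: "real^'n"
  assumes V: "open V" "convex V" "x0 \<in> V"
    and f_differentiable: "\<And>k. f k differentiable_on V"
    and pd_f_continuous: "\<And>k m. continuous_on V (pd m (f k))"
    and f_closed: "\<And>k m x. x \<in> V \<Longrightarrow> pd m (f k) x = pd k (f m) x"
begin

private lemma radial_point_in:
  assumes "y \<in> V" "t \<in> {0..1}"
  shows "x0 + t *\<^sub>R (y - x0) \<in> V"
proof -
  have "x0 + t *\<^sub>R (y - x0) = (1 - t) *\<^sub>R x0 + t *\<^sub>R y"
    by (simp add: algebra_simps)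
  then show ?thesis
    using convexD[OF V(2) V(3) assms(1), of "1 - t" t] assms(2) by simp
qed

private lemma component_has_derivative:
  "z \<in> V \<Longrightarrow> (f k has_derivative (\<lambda>h. \<Sum>m\<in>UNIV. h $ m * pd m (f k) z)) (at z)"
  using f_differentiable[of k] V(1)
  by (intro has_derivative_pd_sum) (simp add: differentiable_on_eq_differentiable_at)

lemma radial_integrand_has_derivative:
  assumes "y \<in> V" "t \<in> {0..1}"
  shows "((\<lambda>y. \<Sum>k\<in>UNIV. f k (x0 + t *\<^sub>R (y - x0)) * (y - x0) $ k) has_derivative
          (\<lambda>h. radial_integrand_gradient f x0 y t \<bullet> h)) (at y)"
proof -
  define p where "p = x0 + t *\<^sub>R (y - x0)"
  have "((\<lambda>y. x0 + t *\<^sub>R (y - x0)) has_derivative (\<lambda>h. t *\<^sub>R h)) (at y)"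
    by (auto intro!: derivative_eq_intros)
  then have "((\<lambda>y. f k (x0 + t *\<^sub>R (y - x0))) has_derivative
              (\<lambda>h. \<Sum>m\<in>UNIV. (t *\<^sub>R h) $ m * pd m (f k) p)) (at y)" for k
    using component_has_derivative[OF radial_point_in[OF assms]] unfolding p_def
    by (rule has_derivative_compose)
  moreover have "((\<lambda>y. (y - x0) $ k) has_derivative (\<lambda>h. h $ k)) (at y)" for k
    by (auto intro!: derivative_eq_intros bounded_linear_imp_has_derivative)
  ultimately have "((\<lambda>y. \<Sum>k\<in>UNIV. f k (x0 + t *\<^sub>R (y - x0)) * (y - x0) $ k) has_derivative
      (\<lambda>h. \<Sum>k\<in>UNIV. f k p * h $ k + (\<Sum>m\<in>UNIV. (t *\<^sub>R h) $ m * pd m (f k) p) * (y - x0) $ k))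
      (at y)"
    unfolding p_def by (intro has_derivative_sum has_derivative_mult)
  moreover have "(\<Sum>k\<in>UNIV. f k p * h $ k + (\<Sum>m\<in>UNIV. (t *\<^sub>R h) $ m * pd m (f k) p) * (y - x0) $ k)
      = radial_integrand_gradient f x0 y t \<bullet> h" for h
  proof -
    have "(\<Sum>k\<in>UNIV. f k p * h $ k + (\<Sum>m\<in>UNIV. (t *\<^sub>R h) $ m * pd m (f k) p) * (y - x0) $ k)
        = (\<Sum>k\<in>UNIV. f k p * h $ k)
          + (\<Sum>k\<in>UNIV. \<Sum>m\<in>UNIV. t * h $ m * pd m (f k) p * (y - x0) $ k)"
      by (simp add: sum.distrib sum_distrib_right mult.assoc)
    also have "\<dots> = (\<Sum>m\<in>UNIV. f m p * h $ m)
          + (\<Sum>m\<in>UNIV. \<Sum>k\<in>UNIV. t * h $ m * pd m (f k) p * (y - x0) $ k)"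
      using sum.swap by simp
    also have "\<dots> = (\<Sum>m\<in>UNIV. (f m p + t * (\<Sum>k\<in>UNIV. (y - x0) $ k * pd m (f k) p)) * h $ m)"
      by (simp add: sum.distrib sum_distrib_left sum_distrib_right algebra_simps)
    finally show ?thesis
      by (simp add: radial_integrand_gradient_def inner_vec_def p_def mult.commute)
  qed
  ultimately show ?thesis
    by simp
qed

lemma radial_integrand_gradient_continuous:
  "continuous_on (V \<times> {0..1}) (\<lambda>(y, t). radial_integrand_gradient f x0 y t)"
proof -
  have point: "continuous_on (V \<times> {0..1}) (\<lambda>z. x0 + snd z *\<^sub>R (fst z - x0))"
    by (intro continuous_intros)
  have image: "(\<lambda>z. x0 + snd z *\<^sub>R (fst z - x0)) ` (V \<times> {0..1}) \<subseteq> V"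
    using radial_point_in by auto
  have "continuous_on V (f k)" for k
    using f_differentiable differentiable_imp_continuous_on by blast
  then have "continuous_on (V \<times> {0..1}) (\<lambda>z. f k (x0 + snd z *\<^sub>R (fst z - x0)))"
    and "continuous_on (V \<times> {0..1}) (\<lambda>z. pd m (f k) (x0 + snd z *\<^sub>R (fst z - x0)))" for k m
    using continuous_on_compose2[OF _ point image] pd_f_continuous by blast+
  then show ?thesis
    unfolding radial_integrand_gradient_def case_prod_unfold
    by (intro continuous_intros)
qed

lemma radial_integrand_gradient_has_integral:
  assumes "y \<in> V"
  shows "((\<lambda>t. radial_integrand_gradient f x0 y t $ i) has_integral f i y) {0..1}"
proof -
  have "((\<lambda>s. s * f i (x0 + s *\<^sub>R (y - x0))) has_vector_derivative
          radial_integrand_gradient f x0 y t $ i) (at t within {0..1})"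
    if t: "t \<in> {0..1}" for t
  proof -
    define p where "p = x0 + t *\<^sub>R (y - x0)"
    have "((\<lambda>s. x0 + s *\<^sub>R (y - x0)) has_derivative (\<lambda>s. s *\<^sub>R (y - x0))) (at t)"
      by (auto intro!: derivative_eq_intros)
    then have "((\<lambda>s. f i (x0 + s *\<^sub>R (y - x0))) has_derivative
                (\<lambda>s. \<Sum>m\<in>UNIV. (s *\<^sub>R (y - x0)) $ m * pd m (f i) p)) (at t)"
      using component_has_derivative[OF radial_point_in[OF assms t]] unfolding p_def
      by (rule has_derivative_compose)
    moreover have "(\<lambda>s. \<Sum>m\<in>UNIV. (s *\<^sub>R (y - x0)) $ m * pd m (f i) p)
        = (*) (\<Sum>m\<in>UNIV. (y - x0) $ m * pd m (f i) p)"
      by (simp add: fun_eq_iff sum_distrib_left algebra_simps)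
    ultimately have "((\<lambda>s. f i (x0 + s *\<^sub>R (y - x0))) has_real_derivative
                (\<Sum>m\<in>UNIV. (y - x0) $ m * pd m (f i) p)) (at t)"
      by (simp add: has_field_derivative_def)
    from DERIV_mult[OF DERIV_ident this]
    have "((\<lambda>s. s * f i (x0 + s *\<^sub>R (y - x0))) has_real_derivative
                f i p + t * (\<Sum>m\<in>UNIV. (y - x0) $ m * pd m (f i) p)) (at t)"
      by (simp add: p_def mult.commute)
    moreover have "f i p + t * (\<Sum>m\<in>UNIV. (y - x0) $ m * pd m (f i) p)
        = radial_integrand_gradient f x0 y t $ i"
      using f_closed[OF radial_point_in[OF assms t]]
      by (simp add: radial_integrand_gradient_def p_def)
    ultimately show ?thesis
      by (simp add: has_real_derivative_iff_has_vector_derivative has_vector_derivative_at_within)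
  qed
  then have "((\<lambda>t. radial_integrand_gradient f x0 y t $ i) has_integral
      1 * f i (x0 + 1 *\<^sub>R (y - x0)) - 0 * f i (x0 + 0 *\<^sub>R (y - x0))) {0..1}"
    by (intro fundamental_theorem_of_calculus) auto
  then show ?thesis
    by simp
qed

lemma radial_integrand_gradient_integrable:
  "y \<in> V \<Longrightarrow> (\<lambda>t. blinfun_inner_right (radial_integrand_gradient f x0 y t)) integrable_on {0..1}"
proof -
  assume "y \<in> V"
  have "continuous_on {0..1} (\<lambda>t. (y, t))"
    by (intro continuous_intros)
  moreover have "(\<lambda>t. (y, t)) ` {0..1} \<subseteq> V \<times> {0..1}"
    using \<open>y \<in> V\<close> by auto
  ultimately have "continuous_on {0..1} (\<lambda>t. radial_integrand_gradient f x0 y t)"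
    using continuous_on_compose2[OF radial_integrand_gradient_continuous] by fastforce
  then show ?thesis
    by (intro integrable_continuous_real continuous_intros)
qed

lemma radial_potential_has_derivative:
  assumes "y \<in> V"
  shows "(radial_potential f x0 has_derivative
          blinfun_apply (integral {0..1} (\<lambda>t. blinfun_inner_right (radial_integrand_gradient f x0 y t))))
          (at y)"
proof -
  have integrable: "(\<lambda>t. \<Sum>k\<in>UNIV. f k (x0 + t *\<^sub>R (z - x0)) * (z - x0) $ k) integrable_on {0..1}"
    if "z \<in> V" for z
  proof -
    have "continuous_on {0..1} (\<lambda>t. x0 + t *\<^sub>R (z - x0))"
      by (intro continuous_intros)
    moreover have "(\<lambda>t. x0 + t *\<^sub>R (z - x0)) ` {0..1} \<subseteq> V"
      using radial_point_in[OF that] by auto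
    moreover have "continuous_on V (f k)" for k
      using f_differentiable differentiable_imp_continuous_on by blast
    ultimately have "continuous_on {0..1} (\<lambda>t. f k (x0 + t *\<^sub>R (z - x0)))" for k
      using continuous_on_compose2 by blast
    then show ?thesis
      by (intro integrable_continuous_real continuous_intros)
  qed
  have "continuous_on (V \<times> cbox 0 1)
      (\<lambda>(z, t). blinfun_inner_right (radial_integrand_gradient f x0 z t))"
    using radial_integrand_gradient_continuous
    by (simp add: case_prod_unfold cbox_interval continuous_intros)
  then have "(radial_potential f x0 has_derivative
          blinfun_apply (integral {0..1} (\<lambda>t. blinfun_inner_right (radial_integrand_gradient f x0 y t))))
          (at y within V)"
    unfolding radial_potential_def[abs_def] cbox_interval[symmetric]
    using radial_integrand_has_derivative integrable assms V(2)
    by (intro leibniz_rule) (auto simp: cbox_interval intro: has_derivative_at_withinI)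
  then show ?thesis
    by (simp add: at_within_open[OF assms V(1)])
qed

lemma pd_radial_potential: "y \<in> V \<Longrightarrow> pd i (radial_potential f x0) y = f i y"
  using radial_integrand_gradient_has_integral[of y i]
  by (simp add: pd_eq_has_derivative[OF radial_potential_has_derivative]
      blinfun_apply_integral[OF radial_integrand_gradient_integrable] inner_axis integral_unique)

lemma radial_potential_differentiable_on: "radial_potential f x0 differentiable_on V"
  using radial_potential_has_derivative V(1)
  by (auto simp: differentiable_on_eq_differentiable_at differentiable_def)

end

lemma closed_form_locally_exact:
  fixes f :: "'n::finite \<Rightarrow> real^'n \<Rightarrow> real"
  assumes "open U" "x0 \<in> U"
    and "\<And>k. f k differentiable_on U"
    and "\<And>k m. continuous_on U (pd m (f k))"
    and "\<And>k m x. x \<in> U \<Longrightarrow> pd m (f k) x = pd k (f m) x"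
  shows "\<exists>V u. open V \<and> x0 \<in> V \<and> V \<subseteq> U \<and> u differentiable_on V \<and>
           (\<forall>i. \<forall>x\<in>V. pd i u x = f i x)"
proof -
  obtain r where "r > 0" and ball: "ball x0 r \<subseteq> U"
    using assms(1,2) openE by blast
  then have V: "open (ball x0 r)" "convex (ball x0 r)" "x0 \<in> ball x0 r"
    by auto
  have f: "f k differentiable_on ball x0 r" "continuous_on (ball x0 r) (pd m (f k))"
    "x \<in> ball x0 r \<Longrightarrow> pd m (f k) x = pd k (f m) x" for k m x
    using assms(3-5) ball by (auto intro: differentiable_on_subset continuous_on_subset)
  show ?thesis
    using radial_potential_differentiable_on[OF V f] pd_radial_potential[OF V f] V ball by blast
qed

locale gibbons_tsarev_system =
  fixes U :: "(real^'n::finite) set"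
    and a q :: "real^'n \<Rightarrow> real"
    and \<mu> \<eta> :: "'n \<Rightarrow> real^'n \<Rightarrow> real"
  assumes open_U: "open U"
    and smooth_a: "smooth_on U a" and smooth_q: "smooth_on U q"
    and smooth_\<mu>: "\<And>i. smooth_on U (\<mu> i)" and smooth_\<eta>: "\<And>i. smooth_on U (\<eta> i)"
    and \<mu>_nonzero: "\<And>i x. x \<in> U \<Longrightarrow> \<mu> i x \<noteq> 0"
    and D_nonzero: "\<And>i j x. i \<noteq> j \<Longrightarrow> x \<in> U \<Longrightarrow>
        \<mu> i x * (a x * \<eta> j x - q x) - \<mu> j x * (a x * \<eta> i x - q x) \<noteq> 0"
    and pd_q: "\<And>i x. x \<in> U \<Longrightarrow> pd i q x = \<eta> i x * pd i a x"
    and pd_pd_a: "\<And>i j x. i \<noteq> j \<Longrightarrow> x \<in> U \<Longrightarrow>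
        pd j (pd i a) x =
          (\<mu> i x + \<mu> j x) * (\<eta> j x - \<eta> i x)
          / (\<mu> i x * (a x * \<eta> j x - q x) - \<mu> j x * (a x * \<eta> i x - q x))
          * pd i a x * pd j a x"
    and pd_\<eta>: "\<And>i j x. i \<noteq> j \<Longrightarrow> x \<in> U \<Longrightarrow>
        pd j (\<eta> i) x =
          \<mu> i x * (\<eta> j x - \<eta> i x)^2
          / (\<mu> i x * (a x * \<eta> j x - q x) - \<mu> j x * (a x * \<eta> i x - q x))
          * pd j a x"
    and pd_\<mu>: "\<And>i j x. i \<noteq> j \<Longrightarrow> x \<in> U \<Longrightarrow>
        pd j (\<mu> i) x =
          \<mu> i x * (\<eta> j x - \<eta> i x) * (\<mu> j x - \<mu> i x)
          / (\<mu> i x * (a x * \<eta> j x - q x) - \<mu> j x * (a x * \<eta> i x - q x))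
          * pd j a x"
begin

definition c :: "'n \<Rightarrow> real^'n \<Rightarrow> real" where
  "c i y = (a y * \<eta> i y - q y) / \<mu> i y"

definition u_grad :: "'n \<Rightarrow> real^'n \<Rightarrow> real" where
  "u_grad i y = pd i a y / \<mu> i y"

lemma D_eq_c_diff:
  "x \<in> U \<Longrightarrow> \<mu> i x * (a x * \<eta> j x - q x) - \<mu> j x * (a x * \<eta> i x - q x)
    = \<mu> i x * \<mu> j x * (c j x - c i x)"
  using \<mu>_nonzero[of x i] \<mu>_nonzero[of x j] by (simp add: c_def field_simps)

lemma differentiable_at_data:
  assumes "x \<in> U"
  shows "a differentiable (at x)" "q differentiable (at x)" "\<mu> i differentiable (at x)"
    "\<eta> i differentiable (at x)" "pd i a differentiable (at x)"
  using smooth_on_differentiable_at[OF _ open_U assms, of _ "[]"]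
    smooth_on_differentiable_at[OF smooth_a open_U assms, of "[i]"]
    smooth_a smooth_q smooth_\<mu> smooth_\<eta> by simp_all

lemma pd_c_off_diagonal:
  assumes "i \<noteq> j" "x \<in> U"
  shows "pd j (c i) x = 0"
proof -
  note diff = differentiable_at_data[OF assms(2)]
  define D where "D = \<mu> i x * (a x * \<eta> j x - q x) - \<mu> j x * (a x * \<eta> i x - q x)"
  have "c i = (\<lambda>y. (a y * \<eta> i y - q y) / \<mu> i y)"
    by (simp add: fun_eq_iff c_def)
  then have pd_c: "pd j (c i) x
      = ((pd j a x * \<eta> i x + a x * pd j (\<eta> i) x - pd j q x) * \<mu> i x
          - (a x * \<eta> i x - q x) * pd j (\<mu> i) x) / (\<mu> i x)^2"
    using diff \<mu>_nonzero[OF assms(2)]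
    by (simp add: pd_divide pd_diff pd_mult differentiable_mult differentiable_diff)
  have "(pd j a x * \<eta> i x + a x * pd j (\<eta> i) x - pd j q x) * \<mu> i x
          - (a x * \<eta> i x - q x) * pd j (\<mu> i) x
      = \<mu> i x * pd j a x * (\<eta> j x - \<eta> i x) / D
      * (a x * \<mu> i x * (\<eta> j x - \<eta> i x) - (a x * \<eta> i x - q x) * (\<mu> j x - \<mu> i x) - D)"
    using D_nonzero[OF assms]
    unfolding pd_\<eta>[OF assms] pd_\<mu>[OF assms] pd_q[OF assms(2)] D_def[symmetric]
    by (simp add: field_simps power2_eq_square)
  also have "a x * \<mu> i x * (\<eta> j x - \<eta> i x) - (a x * \<eta> i x - q x) * (\<mu> j x - \<mu> i x) - D = 0"
    unfolding D_def by algebra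
  finally show ?thesis
    by (simp add: pd_c)
qed

lemma smooth_u_grad: "smooth_on U (u_grad i)"
  using smooth_on_divide[OF open_U smooth_on_pd[OF smooth_a] smooth_\<mu> \<mu>_nonzero]
  by (simp add: u_grad_def[abs_def])

lemma pd_u_grad:
  assumes "i \<noteq> j" "x \<in> U"
  shows "pd j (u_grad i) x = 2 * (\<eta> j x - \<eta> i x) / (c j x - c i x) * u_grad i x * u_grad j x"
proof -
  note diff = differentiable_at_data[OF assms(2)]
  define D where "D = \<mu> i x * (a x * \<eta> j x - q x) - \<mu> j x * (a x * \<eta> i x - q x)"
  have "pd j (u_grad i) x = (pd j (pd i a) x * \<mu> i x - pd i a x * pd j (\<mu> i) x) / (\<mu> i x)^2"
    using diff \<mu>_nonzero[OF assms(2)] by (simp add: u_grad_def[abs_def] pd_divide)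
  also have "\<dots> = 2 * (\<eta> j x - \<eta> i x) / D * pd i a x * pd j a x"
    using \<mu>_nonzero[OF assms(2), of i] D_nonzero[OF assms]
    unfolding pd_pd_a[OF assms] pd_\<mu>[OF assms] D_def[symmetric]
    by (simp add: field_simps power2_eq_square)
  also have "\<dots> = 2 * (\<eta> j x - \<eta> i x) / (c j x - c i x) * u_grad i x * u_grad j x"
    using \<mu>_nonzero[OF assms(2), of i] \<mu>_nonzero[OF assms(2), of j]
    unfolding D_def D_eq_c_diff[OF assms(2)] u_grad_def
    by (simp add: field_simps)
  finally show ?thesis .
qed

lemma u_grad_closed:
  assumes "x \<in> U"
  shows "pd j (u_grad i) x = pd i (u_grad j) x"
proof (cases "i = j")
  case False
  have "2 * (\<eta> j x - \<eta> i x) / (c j x - c i x) = 2 * (\<eta> i x - \<eta> j x) / (c i x - c j x)"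
    by (metis minus_diff_eq minus_divide_divide mult_minus_right)
  then show ?thesis
    unfolding pd_u_grad[OF False assms] pd_u_grad[OF False[symmetric] assms] by (simp only: ac_simps)
qed simp

lemma pd_\<eta>_via_c:
  assumes "i \<noteq> j" "x \<in> U"
  shows "pd j (\<eta> i) x = (\<eta> j x - \<eta> i x)^2 / (c j x - c i x) * u_grad j x"
  using \<mu>_nonzero[OF assms(2), of i] \<mu>_nonzero[OF assms(2), of j]
  unfolding pd_\<eta>[OF assms] D_eq_c_diff[OF assms(2)] u_grad_def
  by simp

lemma pd_\<mu>_via_c:
  assumes "i \<noteq> j" "x \<in> U"
  shows "pd j (\<mu> i) x = (\<eta> j x - \<eta> i x) * (\<mu> j x - \<mu> i x) / (c j x - c i x) * u_grad j x"
  using \<mu>_nonzero[OF assms(2), of i] \<mu>_nonzero[OF assms(2), of j]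
  unfolding pd_\<mu>[OF assms] D_eq_c_diff[OF assms(2)] u_grad_def
  by simp

lemma local_potentialE:
  assumes "x0 \<in> U"
  obtains V u where "open V" "x0 \<in> V" "V \<subseteq> U" "smooth_on V u"
    "\<And>i x. x \<in> V \<Longrightarrow> pd i u x = u_grad i x"
proof -
  have "continuous_on U (pd j (u_grad i))" for i j
    using smooth_on_pd[OF smooth_u_grad]
    by (intro differentiable_imp_continuous_on smooth_on_imp_differentiable_on)
  then obtain V u where V: "open V" "x0 \<in> V" "V \<subseteq> U" "u differentiable_on V"
    and pd_u: "\<forall>i. \<forall>x\<in>V. pd i u x = u_grad i x"
    using closed_form_locally_exact[OF open_U assms smooth_on_imp_differentiable_on[OF smooth_u_grad]
        _ u_grad_closed]
    by blast
  have "smooth_on V (pd k u)" for k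
    using smooth_on_cong[OF V(1) _ smooth_on_subset[OF smooth_u_grad V(3)]] pd_u by simp
  with V(4) have "smooth_on V u"
    by (rule smooth_onI_pd)
  then show ?thesis
    using that V(1-3) pd_u by simp
qed

lemma second_heavenly_form:
  assumes "x0 \<in> U"
  shows "\<exists>V u. open V \<and> x0 \<in> V \<and> V \<subseteq> U \<and> smooth_on V u \<and>
    (\<forall>i. \<forall>x\<in>V. pd i u x = pd i a x / \<mu> i x) \<and>
    (\<forall>i. \<forall>x\<in>V. pd i q x = \<mu> i x * \<eta> i x * pd i u x) \<and>
    (\<forall>i j. \<forall>x\<in>V. i \<noteq> j \<longrightarrow>
       pd j (pd i u) x = 2 * (\<eta> j x - \<eta> i x) / (c j x - c i x) * pd i u x * pd j u x) \<and>
    (\<forall>i j. \<forall>x\<in>V. i \<noteq> j \<longrightarrow>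
       pd j (\<eta> i) x = (\<eta> j x - \<eta> i x)^2 / (c j x - c i x) * pd j u x) \<and>
    (\<forall>i j. \<forall>x\<in>V. i \<noteq> j \<longrightarrow>
       pd j (\<mu> i) x = (\<eta> j x - \<eta> i x) * (\<mu> j x - \<mu> i x) / (c j x - c i x) * pd j u x)"
proof -
  obtain V u where V: "open V" "x0 \<in> V" "V \<subseteq> U" "smooth_on V u"
    and pd_u: "\<And>i x. x \<in> V \<Longrightarrow> pd i u x = u_grad i x"
    using local_potentialE[OF assms] by blast
  have pd_pd_u: "pd j (pd i u) x = pd j (u_grad i) x" if "x \<in> V" for i j x
    using pd_cong_open[OF V(1) pd_u that] .
  show ?thesis
    using V pd_u pd_pd_u pd_q pd_u_grad pd_\<eta>_via_c pd_\<mu>_via_c \<mu>_nonzero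
    by (intro exI[of _ V] exI[of _ u]) (auto simp: u_grad_def)
qed

end

theorem mainTheorem13:
  fixes U :: "(real^'n::finite) set"
    and a q :: "real^'n \<Rightarrow> real"
    and \<mu> \<eta> :: "'n \<Rightarrow> real^'n \<Rightarrow> real"
  assumes U_open: "open U"
    and sm_a: "smooth_on U a" and sm_q: "smooth_on U q"
    and sm_mu: "\<And>i. smooth_on U (\<mu> i)" and sm_eta: "\<And>i. smooth_on U (\<eta> i)"
    and mu_nz: "\<And>i x. x \<in> U \<Longrightarrow> \<mu> i x \<noteq> 0"
    and D_nz: "\<And>i j x. i \<noteq> j \<Longrightarrow> x \<in> U \<Longrightarrow>
        \<mu> i x * (a x * \<eta> j x - q x) - \<mu> j x * (a x * \<eta> i x - q x) \<noteq> 0"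
    and eq_q: "\<And>i x. x \<in> U \<Longrightarrow> pd i q x = \<eta> i x * pd i a x"
    and eq_a: "\<And>i j x. i \<noteq> j \<Longrightarrow> x \<in> U \<Longrightarrow>
        pd j (pd i a) x =
          (\<mu> i x + \<mu> j x) * (\<eta> j x - \<eta> i x)
          / (\<mu> i x * (a x * \<eta> j x - q x) - \<mu> j x * (a x * \<eta> i x - q x))
          * pd i a x * pd j a x"
    and eq_eta: "\<And>i j x. i \<noteq> j \<Longrightarrow> x \<in> U \<Longrightarrow>
        pd j (\<eta> i) x =
          \<mu> i x * (\<eta> j x - \<eta> i x)^2
          / (\<mu> i x * (a x * \<eta> j x - q x) - \<mu> j x * (a x * \<eta> i x - q x))
          * pd j a x"
    and eq_mu: "\<And>i j x. i \<noteq> j \<Longrightarrow> x \<in> U \<Longrightarrow>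
        pd j (\<mu> i) x =
          \<mu> i x * (\<eta> j x - \<eta> i x) * (\<mu> j x - \<mu> i x)
          / (\<mu> i x * (a x * \<eta> j x - q x) - \<mu> j x * (a x * \<eta> i x - q x))
          * pd j a x"
  shows "(\<forall>i j x. i \<noteq> j \<longrightarrow> x \<in> U \<longrightarrow>
            pd j (\<lambda>y. (a y * \<eta> i y - q y) / \<mu> i y) x = 0)
       \<and> (\<forall>x0\<in>U. \<exists>V u. open V \<and> x0 \<in> V \<and> V \<subseteq> U \<and> smooth_on V u \<and>
            (\<forall>i. \<forall>x\<in>V. pd i u x = pd i a x / \<mu> i x) \<and>
            (let c = (\<lambda>i y. (a y * \<eta> i y - q y) / \<mu> i y) in
             (\<forall>i. \<forall>x\<in>V. pd i q x = \<mu> i x * \<eta> i x * pd i u x) \<and>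
             (\<forall>i j. \<forall>x\<in>V. i \<noteq> j \<longrightarrow>
                pd j (pd i u) x = 2 * (\<eta> j x - \<eta> i x) / (c j x - c i x) * pd i u x * pd j u x) \<and>
             (\<forall>i j. \<forall>x\<in>V. i \<noteq> j \<longrightarrow>
                pd j (\<eta> i) x = (\<eta> j x - \<eta> i x)^2 / (c j x - c i x) * pd j u x) \<and>
             (\<forall>i j. \<forall>x\<in>V. i \<noteq> j \<longrightarrow>
                pd j (\<mu> i) x = (\<eta> j x - \<eta> i x) * (\<mu> j x - \<mu> i x) / (c j x - c i x) * pd j u x)))"
proof -
  interpret gibbons_tsarev_system U a q \<mu> \<eta>
    by unfold_locales (fact assms)+
  have "(\<lambda>y. (a y * \<eta> i y - q y) / \<mu> i y) = c i" for i
    by (simp add: fun_eq_iff c_def)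
  then show ?thesis
    using pd_c_off_diagonal second_heavenly_form by (simp add: Let_def)
qed

end
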